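(* For positive integers $\ell,m$, let $A(\ell,m)$ be the $(\ell+m)\times(\ell+m)$ coloring matrix with entries $a_{ij}=0$ if $i,j>\ell$ and $a_{ij}=1$ otherwise (i.e., block form with an $\ell\times\ell$ all-ones upper-left block, all-ones off-diagonal blocks, and an $m\times m$ zero lower-right block). Then for all positive integers $\ell,m,n$, $$t_{A(\ell,m)}(n)=\sum_{k=0}^{n-1}\frac{2}{n}\binom{n}{k}\binom{2n-3}{n-k-1}\ell^{n-k}m^k;$$ for $1\le i\le\ell$, $$t_{A(\ell,m)}^{(i)}(n)=\sum_{k=0}^{n-1}\frac{1}{n}\binom{n}{k}\binom{2n-2}{n-k-1}\ell^{n-k-1}m^k;$$ and for $\ell+1\le i\le\ell+m$ and $n\ge2$, $$t_{A(\ell,m)}^{(i)}(n)=\sum_{k=1}^{n-1}\frac{1}{n-1}\binom{n-1}{k-1}\binom{2n-2}{n-k-1}\ell^{n-k}m^{k-1}.$$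
   Context: A plane tree is an unlabeled rooted tree in which the children of every vertex are linearly ordered. A coloring matrix is a square matrix $A=(a_{ij})$ with entries in $\{0,1\}$. An $A$-coloring of a plane tree assigns to each vertex a color (an index of a row of $A$) such that whenever a vertex of color $j$ is a child of a vertex of color $i$, $a_{ij}=1$. Let $t_A(n)$ be the number of pairs (plane tree with $n$ vertices, $A$-coloring of it) and $t_A^{(i)}(n)$ the number of those with root color $i$. Binomial coefficients $\binom{a}{b}$ with $b<0$ or $b>a\ge0$ are $0$. *)

theory Defs
  imports Complex_Main "HOL-Library.FuncSet"
begin

datatype ptree = PNode "ptree list"

text \<open>Vertices of a plane tree, addressed by their paths from the root
  (the root is the empty path; the i-th child of vertex p is p @ [i]).\<close>
function positions :: "ptree \<Rightarrow> nat list set" where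
  "positions (PNode ts) =
     insert [] (\<Union>i\<in>{..<length ts}. (Cons i) ` positions (ts ! i))"
  by pat_completeness auto
termination
  by (relation "measure size") (auto simp: less_Suc_eq_le intro!: size_list_estimation' nth_mem)

text \<open>Coloring matrix of size N given as a 0/1 function on indices 1..N.
  A-colorings of T: maps from vertices to colors {1..N} with a(c parent)(c child) = 1.\<close>
definition colorings :: "(nat \<Rightarrow> nat \<Rightarrow> nat) \<Rightarrow> nat \<Rightarrow> ptree \<Rightarrow> (nat list \<Rightarrow> nat) set" where
  "colorings a N T = {c \<in> positions T \<rightarrow>\<^sub>E {1..N}.
      \<forall>p i. p \<in> positions T \<and> p @ [i] \<in> positions T \<longrightarrow> a (c p) (c (p @ [i])) = 1}"

definition tA :: "(nat \<Rightarrow> nat \<Rightarrow> nat) \<Rightarrow> nat \<Rightarrow> nat \<Rightarrow> nat" where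
  "tA a N n = card {(T, c). card (positions T) = n \<and> c \<in> colorings a N T}"

definition tAi :: "(nat \<Rightarrow> nat \<Rightarrow> nat) \<Rightarrow> nat \<Rightarrow> nat \<Rightarrow> nat \<Rightarrow> nat" where
  "tAi a N i n = card {(T, c). card (positions T) = n \<and> c \<in> colorings a N T \<and> c [] = i}"

definition Alm :: "nat \<Rightarrow> nat \<Rightarrow> nat \<Rightarrow> nat \<Rightarrow> nat" where
  "Alm l m i j = (if l < i \<and> l < j then 0 else 1)"

end

(*
  Removing the first subtree of the root splits an A-colored plane tree with root color i into
  an A-colored tree with root color j, where a_ij = 1, and a smaller tree with root color i.
  Hence the generating series satisfy T_i = x + (sum of T_j over a_ij = 1) * T_i.  For A(l,m) all
  colors <= l have the same series F and all colors > l the same series G, so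

    F = x + (l F + m G) F,      G = x + l F G.

  With phi = (1 + m x)(1 + l x)^2 and psi = x / phi one finds F(psi) = x / (1 + l x), and
  R = F / (1 - l F) is the compositional inverse of psi, while G = x + l x R.  Lagrange inversion
  turns n [x^n] F and (n-1) [x^(n-1)] R into coefficients of (1 + m x)^a (1 + l x)^b, and the
  formula for t_A(n) = l [x^n] F + m [x^n] G follows from
  (n - 1 + k) C(2n-2, n-k-1) = 2 (n - 1) C(2n-3, n-k-1).
*)

theory Submission
  imports Defs "HOL-Computational_Algebra.Formal_Power_Series"
begin

unbundle fps_syntax

section \<open>Formal power series\<close>

lemma fps_power_mult_deriv_X_mult_inverse_nth:
  fixes \<phi> :: "'a::field_char_0 fps"
  assumes "\<phi> $ 0 = 1"
  shows "(\<phi> ^ Suc p * fps_deriv (fps_X * inverse \<phi>)) $ p = of_bool (p = 0)"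
proof (cases p)
  case 0
  then show ?thesis using assms by (simp add: fps_mult_nth)
next
  case (Suc q)
  have inv: "\<phi> * inverse \<phi> = 1" using assms by (simp add: inverse_mult_eq_1')
  have deriv: "fps_deriv (fps_X * inverse \<phi>) = inverse \<phi> - fps_X * fps_deriv \<phi> * (inverse \<phi>)\<^sup>2"
    using assms by (simp add: fps_inverse_deriv)
  have "\<phi> ^ Suc p * fps_deriv (fps_X * inverse \<phi>) =
      \<phi> ^ Suc q * (\<phi> * inverse \<phi>) - fps_X * (fps_deriv \<phi> * \<phi> ^ q) * (\<phi> * inverse \<phi>)\<^sup>2"
    unfolding deriv Suc by (simp add: algebra_simps power2_eq_square)
  also have "\<dots> = \<phi> ^ Suc q - fps_X * (fps_deriv \<phi> * \<phi> ^ q)"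
    by (simp add: inv)
  finally have expand:
      "\<phi> ^ Suc p * fps_deriv (fps_X * inverse \<phi>) = \<phi> ^ Suc q - fps_X * (fps_deriv \<phi> * \<phi> ^ q)" .
  \<comment> \<open>the two terms cancel because \<open>(\<phi> ^ (q + 1))' = (q + 1) \<phi>' \<phi> ^ q\<close>\<close>
  have "fps_deriv (\<phi> ^ Suc q) = fps_const (of_nat (Suc q)) * (fps_deriv \<phi> * \<phi> ^ q)"
    using fps_deriv_power[of \<phi> "Suc q"] by (simp only: diff_Suc_1 mult.assoc)
  then have "of_nat (Suc q) * (\<phi> ^ Suc q) $ Suc q = of_nat (Suc q) * (fps_deriv \<phi> * \<phi> ^ q) $ q"
    using fps_deriv_nth[of "\<phi> ^ Suc q" q] by (simp only: fps_mult_left_const_nth Suc_eq_plus1)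
  then have "(\<phi> ^ Suc q) $ Suc q = (fps_deriv \<phi> * \<phi> ^ q) $ q"
    by (simp del: of_nat_Suc power_Suc)
  then show ?thesis
    unfolding expand using Suc by simp
qed

lemma fps_compose_X_mult_mult_nth:
  fixes A B Q :: "'a::comm_semiring_1 fps"
  shows "((A oo (fps_X * Q)) * B) $ n = (\<Sum>i=0..n. A $ i * ((fps_X * Q) ^ i * B) $ n)"
proof -
  let ?\<psi> = "fps_X * Q"
  have vanish: "(?\<psi> ^ i) $ k = 0" if "k < i" for i k
    using that by (simp add: power_mult_distrib fps_X_power_mult_nth)
  have "(A oo ?\<psi>) $ k = (\<Sum>i=0..n. A $ i * (?\<psi> ^ i) $ k)" if "k \<le> n" for k
    unfolding fps_compose_nth using that vanish by (intro sum.mono_neutral_left) auto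
  then have "((A oo ?\<psi>) * B) $ n = (\<Sum>k=0..n. \<Sum>i=0..n. A $ i * (?\<psi> ^ i) $ k * B $ (n - k))"
    by (simp add: fps_mult_nth sum_distrib_right)
  also have "\<dots> = (\<Sum>i=0..n. A $ i * (?\<psi> ^ i * B) $ n)"
    by (subst sum.swap) (simp add: fps_mult_nth sum_distrib_left mult.assoc)
  finally show ?thesis .
qed

theorem fps_lagrange_inversion:
  fixes \<phi> A H :: "'a::field_char_0 fps"
  assumes "\<phi> $ 0 = 1" and "A oo (fps_X * inverse \<phi>) = H" and "n \<ge> 1"
  shows "of_nat n * A $ n = (fps_deriv H * \<phi> ^ n) $ (n - 1)"
proof -
  let ?\<psi> = "fps_X * inverse \<phi>"
  have summand: "(?\<psi> ^ i * (fps_deriv ?\<psi> * \<phi> ^ n)) $ (n - 1) = of_bool (i = n - 1)"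
    if "i \<le> n - 1" for i
  proof -
    have "i + Suc (n - 1 - i) = n"
      using that \<open>n \<ge> 1\<close> by simp
    then have "\<phi> ^ n = \<phi> ^ i * \<phi> ^ Suc (n - 1 - i)"
      by (metis power_add)
    then have "inverse \<phi> ^ i * \<phi> ^ n = \<phi> ^ Suc (n - 1 - i)"
      using inverse_mult_eq_1[of \<phi>] assms(1)
      by (simp add: mult.assoc flip: mult.assoc[of "inverse \<phi> ^ i"] power_mult_distrib)
    then have "?\<psi> ^ i * (fps_deriv ?\<psi> * \<phi> ^ n) = fps_X ^ i * (\<phi> ^ Suc (n - 1 - i) * fps_deriv ?\<psi>)"
      by (simp add: power_mult_distrib mult_ac)
    then have "(?\<psi> ^ i * (fps_deriv ?\<psi> * \<phi> ^ n)) $ (n - 1)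
        = (\<phi> ^ Suc (n - 1 - i) * fps_deriv ?\<psi>) $ (n - 1 - i)"
      using that by (simp only: fps_X_power_mult_nth) simp
    then show ?thesis
      using that fps_power_mult_deriv_X_mult_inverse_nth[OF assms(1), of "n - 1 - i"] by auto
  qed
  have "fps_deriv H * \<phi> ^ n = (fps_deriv A oo ?\<psi>) * (fps_deriv ?\<psi> * \<phi> ^ n)"
    using fps_compose_deriv[of ?\<psi> A] assms(2) by (simp add: mult.assoc)
  then have "(fps_deriv H * \<phi> ^ n) $ (n - 1)
      = (\<Sum>i=0..n-1. fps_deriv A $ i * (?\<psi> ^ i * (fps_deriv ?\<psi> * \<phi> ^ n)) $ (n - 1))"
    by (simp only: fps_compose_X_mult_mult_nth)
  also have "\<dots> = (\<Sum>i=0..n-1. fps_deriv A $ i * of_bool (i = n - 1))"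
    by (rule sum.cong) (simp_all only: summand atLeastAtMost_iff)
  also have "\<dots> = fps_deriv A $ (n - 1)"
    by (simp del: fps_deriv_nth)
  also have "\<dots> = of_nat n * A $ n"
    using \<open>n \<ge> 1\<close> by (cases n) simp_all
  finally show ?thesis ..
qed

lemma fps_linear_power_nth:
  "((1 + fps_const c * fps_X) ^ N) $ k = of_nat (N choose k) * (c :: 'a::comm_ring_1) ^ k"
proof (induction N arbitrary: k)
  case 0
  then show ?case by (cases k) auto
next
  case (Suc N)
  have "(1 + fps_const c * fps_X) ^ Suc N
      = (1 + fps_const c * fps_X) ^ N + fps_const c * (fps_X * (1 + fps_const c * fps_X) ^ N)"
    by (simp add: algebra_simps)
  then show ?case
    using Suc.IH by (cases k) (simp_all add: algebra_simps)
qed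

lemma fps_mult_nth_eq_0:
  fixes P Q :: "'a::comm_semiring_1 fps"
  assumes "P $ 0 = 0" and "\<And>k. k < n \<Longrightarrow> Q $ k = 0"
  shows "(P * Q) $ n = 0"
  unfolding fps_mult_nth
proof (intro sum.neutral ballI)
  fix i assume "i \<in> {0..n}"
  then show "P $ i * Q $ (n - i) = 0"
    using assms by (cases "i = 0") auto
qed

lemma fps_mult_nth_if_nth_0:
  fixes P Q :: "'a::comm_semiring_1 fps"
  assumes "P $ 0 = 0" "Q $ 0 = 0"
  shows "(P * Q) $ n = (\<Sum>k\<in>{1..<n}. P $ k * Q $ (n - k))"
  unfolding fps_mult_nth
proof (rule sum.mono_neutral_right)
  show "\<forall>k\<in>{0..n} - {1..<n}. P $ k * Q $ (n - k) = 0"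
    using assms by (auto simp: not_less_eq_eq)
qed auto

text \<open>The \<open>n\<close>-th coefficients of the right-hand sides only involve lower coefficients of \<open>f\<close>
  and \<open>g\<close>, so the system determines its solution coefficient by coefficient.\<close>
lemma fps_tree_system_unique:
  fixes f g f' g' p a b :: "'a::comm_ring_1 fps"
  assumes "f $ 0 = 0" "g $ 0 = 0" "f' $ 0 = 0" "g' $ 0 = 0"
    and f: "f = p + (a * f + b * g) * f" and g: "g = p + a * f * g"
    and f': "f' = p + (a * f' + b * g') * f'" and g': "g' = p + a * f' * g'"
  shows "f = f' \<and> g = g'"
proof -
  let ?D = "f - f'" and ?E = "g - g'"
  have D: "?D = (a * f + b * g) * ?D + f' * (a * ?D + b * ?E)"
    by (subst f, subst f') (simp add: algebra_simps)
  have E: "?E = a * f * ?E + g' * (a * ?D)"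
    by (subst g, subst g') (simp add: algebra_simps)
  have "?D $ n = 0 \<and> ?E $ n = 0" for n
  proof (induction n rule: less_induct)
    case (less n)
    then have lower: "\<And>k. k < n \<Longrightarrow> ?D $ k = 0" "\<And>k. k < n \<Longrightarrow> ?E $ k = 0"
      by auto
    moreover have "\<And>k. k < n \<Longrightarrow> (a * ?D + b * ?E) $ k = 0" "\<And>k. k < n \<Longrightarrow> (a * ?D) $ k = 0"
      using lower by (auto simp: fps_mult_nth)
    ultimately have terms: "((a * f + b * g) * ?D) $ n = 0" "(f' * (a * ?D + b * ?E)) $ n = 0"
        "(a * f * ?E) $ n = 0" "(g' * (a * ?D)) $ n = 0"
      using assms(1-4) by (auto intro: fps_mult_nth_eq_0)
    have "?D $ n = 0"
      using terms(1,2) by (subst D) simp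
    moreover have "?E $ n = 0"
      using terms(3,4) by (subst E) simp
    ultimately show ?case ..
  qed
  then show ?thesis by (simp add: fps_eq_iff)
qed

section \<open>Plane trees\<close>

lemma Nil_in_positions [simp]: "[] \<in> positions T"
  by (cases T) simp

lemma Cons_in_positions_iff [simp]:
  "i # q \<in> positions (PNode ts) \<longleftrightarrow> i < length ts \<and> q \<in> positions (ts ! i)"
  by auto

declare positions.simps [simp del]

lemma Cons_0_in_positions_iff [simp]: "0 # q \<in> positions (PNode (t # ts)) \<longleftrightarrow> q \<in> positions t"
  by simp

lemma Cons_Suc_in_positions_iff [simp]:
  "Suc k # q \<in> positions (PNode (t # ts)) \<longleftrightarrow> k # q \<in> positions (PNode ts)"
  by simp

lemma positions_PNode_Nil [simp]: "positions (PNode []) = {[]}"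
  by (auto simp: positions.simps)

lemma finite_positions [simp]: "finite (positions T)"
  by (induction T rule: positions.induct) (simp add: positions.simps)

fun incr_head :: "nat list \<Rightarrow> nat list" where
  "incr_head [] = []"
| "incr_head (k # q) = Suc k # q"

lemma inj_incr_head: "inj incr_head"
proof (rule injI)
  fix p q :: "nat list"
  show "incr_head p = incr_head q \<Longrightarrow> p = q"
    by (cases p; cases q) auto
qed

lemma positions_PNode_Cons:
  "positions (PNode (t # ts)) = Cons 0 ` positions t \<union> incr_head ` positions (PNode ts)"
proof (intro set_eqI iffI)
  fix p assume "p \<in> positions (PNode (t # ts))"
  then show "p \<in> Cons 0 ` positions t \<union> incr_head ` positions (PNode ts)"
  proof (cases p)
    case Nil
    then show ?thesis using image_eqI[of "[]" incr_head "[]" "positions (PNode ts)"] by simp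
  next
    case (Cons k q)
    then show ?thesis
      using \<open>p \<in> _\<close> image_eqI[of p incr_head "(k - 1) # q"] by (cases k) auto
  qed
next
  fix p assume "p \<in> Cons 0 ` positions t \<union> incr_head ` positions (PNode ts)"
  then show "p \<in> positions (PNode (t # ts))"
  proof
    assume "p \<in> incr_head ` positions (PNode ts)"
    then obtain q where "q \<in> positions (PNode ts)" "p = incr_head q" by blast
    then show ?thesis by (cases q) auto
  qed auto
qed

lemma card_positions_PNode_Cons:
  "card (positions (PNode (t # ts))) = card (positions t) + card (positions (PNode ts))"
proof -
  have "0 # p \<noteq> incr_head q" for p q
    by (cases q) auto
  then have "Cons 0 ` positions t \<inter> incr_head ` positions (PNode ts) = {}"
    by blast
  then have "card (positions (PNode (t # ts)))
      = card (Cons 0 ` positions t) + card (incr_head ` positions (PNode ts))"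
    unfolding positions_PNode_Cons by (simp add: card_Un_disjoint)
  then show ?thesis
    using card_image[OF inj_on_subset[OF inj_incr_head subset_UNIV]] by (simp add: card_image)
qed

lemma card_positions_pos: "card (positions T) > 0"
  using Nil_in_positions[of T] by (metis card_gt_0_iff empty_iff finite_positions)

lemma card_positions_eq_1D: "card (positions T) = 1 \<Longrightarrow> T = PNode []"
proof (cases T)
  case (PNode ts)
  assume "card (positions T) = 1"
  then show ?thesis
  proof (cases ts)
    case (Cons t ts')
    then show ?thesis
      using \<open>card (positions T) = 1\<close> PNode card_positions_PNode_Cons[of t ts']
        card_positions_pos[of t] card_positions_pos[of "PNode ts'"] by simp
  qed (simp add: PNode)
qed

section \<open>Colored plane trees and their generating series\<close>

type_synonym colored_tree = "ptree \<times> (nat list \<Rightarrow> nat)"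

definition respects_matrix :: "(nat \<Rightarrow> nat \<Rightarrow> nat) \<Rightarrow> ptree \<Rightarrow> (nat list \<Rightarrow> nat) \<Rightarrow> bool" where
  "respects_matrix a T c \<longleftrightarrow> (\<forall>p i. p \<in> positions T \<and> p @ [i] \<in> positions T \<longrightarrow> a (c p) (c (p @ [i])) = 1)"

lemma colorings_iff: "c \<in> colorings a N T \<longleftrightarrow> c \<in> positions T \<rightarrow>\<^sub>E {1..N} \<and> respects_matrix a T c"
  by (simp add: colorings_def respects_matrix_def)

lemma respects_matrix_cong:
  "(\<And>p. p \<in> positions T \<Longrightarrow> c p = c' p) \<Longrightarrow> respects_matrix a T c \<longleftrightarrow> respects_matrix a T c'"
  by (simp add: respects_matrix_def)

lemma respects_matrix_PNode_ConsD:
  assumes "respects_matrix a (PNode (t # ts)) c"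
  shows "a (c []) (c [0]) = 1" "respects_matrix a t (c \<circ> Cons 0)"
    "respects_matrix a (PNode ts) (c \<circ> incr_head)"
proof -
  have edge: "a (c p) (c (p @ [i])) = 1"
    if "p \<in> positions (PNode (t # ts))" "p @ [i] \<in> positions (PNode (t # ts))" for p i
    using assms that unfolding respects_matrix_def by blast
  show "a (c []) (c [0]) = 1" "respects_matrix a t (c \<circ> Cons 0)"
    unfolding respects_matrix_def using edge[of "[]" 0] edge[of "0 # _"] by simp_all
  show "respects_matrix a (PNode ts) (c \<circ> incr_head)"
    unfolding respects_matrix_def
  proof (intro allI impI)
    fix p i assume p: "p \<in> positions (PNode ts) \<and> p @ [i] \<in> positions (PNode ts)"
    show "a ((c \<circ> incr_head) p) ((c \<circ> incr_head) (p @ [i])) = 1"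
    proof (cases p)
      case Nil
      then show ?thesis using p edge[of "[]" "Suc i"] by simp
    next
      case (Cons k q)
      then show ?thesis using p edge[of "Suc k # q" i] by simp
    qed
  qed
qed

lemma respects_matrix_PNode_ConsI:
  assumes root: "a (c []) (c [0]) = 1" and first: "respects_matrix a t (c \<circ> Cons 0)"
    and rest: "respects_matrix a (PNode ts) (c \<circ> incr_head)"
  shows "respects_matrix a (PNode (t # ts)) c"
  unfolding respects_matrix_def
proof (intro allI impI)
  fix p i assume p: "p \<in> positions (PNode (t # ts)) \<and> p @ [i] \<in> positions (PNode (t # ts))"
  show "a (c p) (c (p @ [i])) = 1"
  proof (cases p)
    case Nil
    then show ?thesis
      using p root rest[unfolded respects_matrix_def, rule_format, of "[]" "i - 1"] by (cases i) auto
  next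
    case (Cons k q)
    then show ?thesis
      using p first[unfolded respects_matrix_def, rule_format, of q i]
        rest[unfolded respects_matrix_def, rule_format, of "(k - 1) # q" i] by (cases k) auto
  qed
qed

lemma respects_matrix_PNode_Cons:
  "respects_matrix a (PNode (t # ts)) c \<longleftrightarrow>
     a (c []) (c [0]) = 1 \<and> respects_matrix a t (c \<circ> Cons 0) \<and> respects_matrix a (PNode ts) (c \<circ> incr_head)"
  using respects_matrix_PNode_ConsD respects_matrix_PNode_ConsI by blast

lemma PiE_PNode_Cons_iff:
  "c \<in> positions (PNode (t # ts)) \<rightarrow>\<^sub>E A \<longleftrightarrow> c \<in> extensional (positions (PNode (t # ts)))
     \<and> restrict (c \<circ> Cons 0) (positions t) \<in> positions t \<rightarrow>\<^sub>E A
     \<and> restrict (c \<circ> incr_head) (positions (PNode ts)) \<in> positions (PNode ts) \<rightarrow>\<^sub>E A"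
  unfolding restrict_PiE_iff PiE_iff positions_PNode_Cons by auto

lemma colorings_PNode_Cons_iff:
  "c \<in> colorings a N (PNode (t # ts)) \<longleftrightarrow> c \<in> extensional (positions (PNode (t # ts)))
     \<and> restrict (c \<circ> Cons 0) (positions t) \<in> colorings a N t
     \<and> restrict (c \<circ> incr_head) (positions (PNode ts)) \<in> colorings a N (PNode ts)
     \<and> a (c []) (c [0]) = 1"
proof -
  have "respects_matrix a T (restrict f (positions T)) \<longleftrightarrow> respects_matrix a T f" for T f
    by (rule respects_matrix_cong) simp
  then show ?thesis
    unfolding colorings_iff PiE_PNode_Cons_iff respects_matrix_PNode_Cons by auto
qed

lemma PNode_Cons_if_card_positions_ge_2:
  assumes "card (positions T) \<ge> 2"
  obtains t ts where "T = PNode (t # ts)"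
proof (cases T)
  case (PNode ts)
  with assms that show thesis
    by (cases ts) auto
qed

definition colored_trees :: "(nat \<Rightarrow> nat \<Rightarrow> nat) \<Rightarrow> nat \<Rightarrow> nat \<Rightarrow> nat \<Rightarrow> colored_tree set" where
  "colored_trees a N i n = {(T, c). card (positions T) = n \<and> c \<in> colorings a N T \<and> c [] = i}"

lemma colored_trees_0: "colored_trees a N i 0 = {}"
proof -
  have "card (positions T) \<noteq> 0" for T
    using card_positions_pos[of T] by (simp only: neq0_conv)
  then show ?thesis
    by (auto simp: colored_trees_def)
qed

lemma colored_trees_1:
  "colored_trees a N i (Suc 0) = (if i \<in> {1..N} then {(PNode [], restrict (\<lambda>_. i) {[]})} else {})"
proof -
  have "(T, c) \<in> colored_trees a N i (Suc 0) \<longleftrightarrow> i \<in> {1..N} \<and> T = PNode [] \<and> c = restrict (\<lambda>_. i) {[]}" for T c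
  proof
    assume Tc: "(T, c) \<in> colored_trees a N i (Suc 0)"
    then have T: "T = PNode []"
      using card_positions_eq_1D by (simp add: colored_trees_def)
    with Tc have "c \<in> {[]} \<rightarrow>\<^sub>E {1..N}" "c [] = i"
      by (auto simp: colored_trees_def colorings_iff)
    then show "i \<in> {1..N} \<and> T = PNode [] \<and> c = restrict (\<lambda>_. i) {[]}"
      using T by (auto simp: PiE_iff extensional_def intro!: ext)
  qed (auto simp: colored_trees_def colorings_iff respects_matrix_def)
  then show ?thesis
    by auto
qed

lemma colored_trees_extensional: "(T, c) \<in> colored_trees a N i n \<Longrightarrow> c \<in> extensional (positions T)"
  by (simp add: colored_trees_def colorings_iff PiE_iff)

fun join_colorings :: "(nat list \<Rightarrow> nat) \<Rightarrow> (nat list \<Rightarrow> nat) \<Rightarrow> nat list \<Rightarrow> nat" where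
  "join_colorings c1 c2 [] = c2 []"
| "join_colorings c1 c2 (0 # q) = c1 q"
| "join_colorings c1 c2 (Suc k # q) = c2 (k # q)"

lemma join_colorings_incr_head [simp]: "join_colorings c1 c2 (incr_head q) = c2 q"
  by (cases q) auto

fun graft :: "colored_tree \<Rightarrow> colored_tree \<Rightarrow> colored_tree" where
  "graft (t, c1) (PNode ts, c2) =
     (PNode (t # ts), restrict (join_colorings c1 c2) (positions (PNode (t # ts))))"

fun split_first :: "colored_tree \<Rightarrow> colored_tree \<times> colored_tree" where
  "split_first (PNode (t # ts), c) =
     ((t, restrict (c \<circ> Cons 0) (positions t)), (PNode ts, restrict (c \<circ> incr_head) (positions (PNode ts))))"

lemma restrict_graft_coloring:
  "restrict (restrict (join_colorings c1 c2) (positions (PNode (t # ts))) \<circ> Cons 0) (positions t)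
     = restrict c1 (positions t)"
  "restrict (restrict (join_colorings c1 c2) (positions (PNode (t # ts))) \<circ> incr_head) (positions (PNode ts))
     = restrict c2 (positions (PNode ts))"
  by (auto simp: positions_PNode_Cons)

definition graft_pairs :: "(nat \<Rightarrow> nat \<Rightarrow> nat) \<Rightarrow> nat \<Rightarrow> nat \<Rightarrow> nat \<Rightarrow> (colored_tree \<times> colored_tree) set" where
  "graft_pairs a N i n =
     (\<Union>k\<in>{1..<n}. (\<Union>j\<in>{j\<in>{1..N}. a i j = 1}. colored_trees a N j k) \<times> colored_trees a N i (n - k))"

lemma graft_in_colored_trees:
  assumes "(t, c1) \<in> colored_trees a N j k" "(T, c2) \<in> colored_trees a N i k'" "a i j = 1"
  shows "graft (t, c1) (T, c2) \<in> colored_trees a N i (k + k')"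
proof -
  obtain ts where T: "T = PNode ts"
    by (cases T)
  have "restrict c1 (positions t) = c1" "restrict c2 (positions T) = c2"
    using assms(1,2) by (simp_all add: colored_trees_extensional extensional_restrict)
  then show ?thesis
    using assms unfolding T
    by (auto simp: colored_trees_def colorings_PNode_Cons_iff restrict_graft_coloring
        card_positions_PNode_Cons)
qed

lemma split_first_in_graft_pairs:
  assumes "(T, c) \<in> colored_trees a N i n" "n \<ge> 2"
  shows "split_first (T, c) \<in> graft_pairs a N i n"
proof -
  obtain t ts where T: "T = PNode (t # ts)"
    using assms PNode_Cons_if_card_positions_ge_2[of T] by (auto simp: colored_trees_def)
  have c: "c \<in> colorings a N T" "c [] = i" "card (positions T) = n"
    using assms(1) by (auto simp: colored_trees_def)
  then have "c [0] \<in> {1..N}"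
    by (auto simp: T colorings_iff PiE_iff)
  moreover have "card (positions t) \<in> {1..<n}"
    using c(3) card_positions_pos[of t] card_positions_pos[of "PNode ts"]
    by (simp add: T card_positions_PNode_Cons)
  ultimately show ?thesis
    using c unfolding T graft_pairs_def
    by (auto simp: colored_trees_def colorings_PNode_Cons_iff card_positions_PNode_Cons)
qed

lemma split_first_graft:
  assumes "c1 \<in> extensional (positions t)" "c2 \<in> extensional (positions T)"
  shows "split_first (graft (t, c1) (T, c2)) = ((t, c1), (T, c2))"
  using assms by (cases T) (simp add: restrict_graft_coloring extensional_restrict)

lemma graft_split_first:
  assumes "(T, c) \<in> colored_trees a N i n" "n \<ge> 2"
  shows "case_prod graft (split_first (T, c)) = (T, c)"
proof -
  obtain t ts where T: "T = PNode (t # ts)"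
    using assms PNode_Cons_if_card_positions_ge_2[of T] by (auto simp: colored_trees_def)
  have "restrict (join_colorings (restrict (c \<circ> Cons 0) (positions t))
      (restrict (c \<circ> incr_head) (positions (PNode ts)))) (positions T) p = c p" for p
  proof (cases "p \<in> positions T")
    case True
    show ?thesis
    proof (cases p)
      case (Cons k q)
      then show ?thesis
        using True unfolding T by (cases k) auto
    qed (simp add: T)
  next
    case False
    then show ?thesis
      using colored_trees_extensional[OF assms(1)] by (simp add: extensional_def)
  qed
  then show ?thesis
    by (auto simp: T)
qed

lemma bij_betw_graft:
  assumes "n \<ge> 2"
  shows "bij_betw (case_prod graft) (graft_pairs a N i n) (colored_trees a N i n)"
proof (rule bij_betw_byWitness[where f' = split_first])
  show "\<forall>x\<in>graft_pairs a N i n. split_first (case_prod graft x) = x"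
    by (auto simp: graft_pairs_def split_first_graft colored_trees_extensional)
  show "\<forall>y\<in>colored_trees a N i n. case_prod graft (split_first y) = y"
    using graft_split_first assms by auto
  show "case_prod graft ` graft_pairs a N i n \<subseteq> colored_trees a N i n"
    using graft_in_colored_trees by (fastforce simp: graft_pairs_def)
  show "split_first ` colored_trees a N i n \<subseteq> graft_pairs a N i n"
    using split_first_in_graft_pairs assms by auto
qed

lemma colored_trees_root_size_unique:
  "x \<in> colored_trees a N i n \<Longrightarrow> x \<in> colored_trees a N i' n' \<Longrightarrow> i = i' \<and> n = n'"
  by (auto simp: colored_trees_def)

lemma finite_colored_trees: "finite (colored_trees a N i n)"
proof (induction n arbitrary: i rule: less_induct)
  case (less n)
  show ?case
  proof (cases "n \<ge> 2")
    case True
    have "finite (graft_pairs a N i n)"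
      unfolding graft_pairs_def using less by (auto intro!: finite_cartesian_product)
    then show ?thesis
      using bij_betw_imp_surj_on[OF bij_betw_graft[OF True]] by (metis finite_imageI)
  next
    case False
    then have "n = 0 \<or> n = Suc 0"
      by auto
    then show ?thesis
      by (auto simp: colored_trees_0 colored_trees_1)
  qed
qed

lemma card_colored_trees_rec:
  assumes "n \<ge> 2"
  shows "card (colored_trees a N i n) =
    (\<Sum>k\<in>{1..<n}. (\<Sum>j\<in>{j\<in>{1..N}. a i j = 1}. card (colored_trees a N j k))
      * card (colored_trees a N i (n - k)))"
proof -
  have "card (colored_trees a N i n) = card (graft_pairs a N i n)"
    using bij_betw_same_card[OF bij_betw_graft[OF assms]] by simp
  also have "\<dots> = (\<Sum>k\<in>{1..<n}. card (\<Union>j\<in>{j\<in>{1..N}. a i j = 1}. colored_trees a N j k)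
      * card (colored_trees a N i (n - k)))"
    unfolding graft_pairs_def
    by (subst card_UN_disjoint)
      (auto simp: finite_colored_trees card_cartesian_product dest: colored_trees_root_size_unique)
  also have "\<dots> = (\<Sum>k\<in>{1..<n}. (\<Sum>j\<in>{j\<in>{1..N}. a i j = 1}. card (colored_trees a N j k))
      * card (colored_trees a N i (n - k)))"
    by (subst card_UN_disjoint) (auto simp: finite_colored_trees dest: colored_trees_root_size_unique)
  finally show ?thesis .
qed

lemma card_colored_trees_eq_if_same_row:
  assumes "\<And>j. a i j = a i' j" "i \<in> {1..N}" "i' \<in> {1..N}"
  shows "card (colored_trees a N i n) = card (colored_trees a N i' n)"
proof (induction n rule: less_induct)
  case (less n)
  show ?case
  proof (cases "n \<ge> 2")
    case True
    then show ?thesis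
      unfolding card_colored_trees_rec[OF True] assms(1) using less by (intro sum.cong) auto
  next
    case False
    then have "n = 0 \<or> n = Suc 0"
      by auto
    then show ?thesis
      using assms by (auto simp: colored_trees_0 colored_trees_1)
  qed
qed

lemma tAi_eq_card_colored_trees: "tAi a N i n = card (colored_trees a N i n)"
  by (simp add: tAi_def colored_trees_def)

lemma tA_eq_sum_tAi: "tA a N n = (\<Sum>i\<in>{1..N}. tAi a N i n)"
proof -
  have "{(T, c). card (positions T) = n \<and> c \<in> colorings a N T} = (\<Union>i\<in>{1..N}. colored_trees a N i n)"
    by (auto simp: colored_trees_def colorings_iff PiE_iff)
  then show ?thesis
    unfolding tA_def tAi_eq_card_colored_trees
    by (simp, subst card_UN_disjoint) (auto simp: finite_colored_trees dest: colored_trees_root_size_unique)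
qed

definition colored_tree_series :: "(nat \<Rightarrow> nat \<Rightarrow> nat) \<Rightarrow> nat \<Rightarrow> nat \<Rightarrow> 'a::comm_semiring_1 fps" where
  "colored_tree_series a N i = Abs_fps (\<lambda>n. of_nat (card (colored_trees a N i n)))"

lemma colored_tree_series_nth_0 [simp]: "colored_tree_series a N i $ 0 = 0"
  by (simp add: colored_tree_series_def colored_trees_0)

lemma colored_tree_series_eq:
  assumes "i \<in> {1..N}"
  shows "colored_tree_series a N i =
    fps_X + (\<Sum>j\<in>{j\<in>{1..N}. a i j = 1}. colored_tree_series a N j) * colored_tree_series a N i"
    (is "?T = fps_X + ?S * ?T")
proof (rule fps_ext)
  fix n
  have "?S $ 0 = 0"
    by (simp add: fps_sum_nth)
  then have product: "(?S * ?T) $ n = (\<Sum>k\<in>{1..<n}. (\<Sum>j\<in>{j\<in>{1..N}. a i j = 1}.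
      colored_tree_series a N j $ k) * ?T $ (n - k))"
    by (simp only: fps_mult_nth_if_nth_0 colored_tree_series_nth_0 fps_sum_nth)
  show "?T $ n = (fps_X + ?S * ?T) $ n"
  proof (cases "n \<ge> 2")
    case True
    then show ?thesis
      unfolding fps_add_nth product
      unfolding colored_tree_series_def fps_nth_Abs_fps card_colored_trees_rec[OF True]
      by (simp only: of_nat_sum of_nat_mult) simp
  next
    case False
    then have "n = 0 \<or> n = 1"
      by auto
    then show ?thesis
      unfolding fps_add_nth product using assms
      by (auto simp: colored_tree_series_def colored_trees_0 colored_trees_1)
  qed
qed

lemma colored_tree_series_eq_if_same_row:
  assumes "\<And>j. a i j = a i' j" "i \<in> {1..N}" "i' \<in> {1..N}"
  shows "colored_tree_series a N i = colored_tree_series a N i'"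
  using card_colored_trees_eq_if_same_row[of a i i' N] assms by (simp add: colored_tree_series_def)

section \<open>The matrix \<open>A(l, m)\<close>\<close>

lemma binomial_absorb_comp_2n:
  assumes "k < n"
  shows "(n - 1 + k) * ((2*n-2) choose (n-k-1)) = 2 * (n - 1) * ((2*n-3) choose (n-k-1))"
proof -
  have "2*n-2 - (n-k-1) = n - 1 + k" "2*n-2 - 1 = 2*n-3"
    using assms by auto
  then show ?thesis
    using binomial_absorb_comp[of "2*n-2" "n-k-1"] by (simp add: right_diff_distrib')
qed

lemma binomial_coeff_combination:
  assumes "n \<ge> 2" "k < n"
  shows "(1 + of_nat k / of_nat (n - 1)) * (of_nat (n choose k) * of_nat ((2*n-2) choose (n-k-1)) / of_nat n)
    = (2 / of_nat n * of_nat (n choose k) * of_nat ((2*n-3) choose (n-k-1)) :: 'a::field_char_0)"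
proof -
  define a C X Y where "a = (of_nat (n - 1) :: 'a)" and "C = (of_nat (n choose k) :: 'a)"
    and "X = (of_nat ((2*n-2) choose (n-k-1)) :: 'a)" and "Y = (of_nat ((2*n-3) choose (n-k-1)) :: 'a)"
  have "a \<noteq> 0"
    using assms by (simp add: a_def)
  have "(a + of_nat k) * X = 2 * a * Y"
    using binomial_absorb_comp_2n[OF assms(2)] unfolding a_def X_def Y_def
    by (metis of_nat_add of_nat_mult of_nat_numeral)
  then have "(1 + of_nat k / a) * (C * X / of_nat n) = 2 / of_nat n * C * Y"
    using \<open>a \<noteq> 0\<close> by (simp add: field_simps)
  then show ?thesis
    by (simp only: a_def C_def X_def Y_def)
qed

locale Alm_series =
  fixes l m :: "'a::field_char_0" and F G :: "'a fps"
  assumes F_nth_0: "F $ 0 = 0" and G_nth_0: "G $ 0 = 0"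
    and F_eq: "F = fps_X + (fps_const l * F + fps_const m * G) * F"
    and G_eq: "G = fps_X + fps_const l * F * G"
begin

definition L :: "'a fps" where "L = 1 + fps_const l * fps_X"
definition M :: "'a fps" where "M = 1 + fps_const m * fps_X"
definition \<phi> :: "'a fps" where "\<phi> = M * L\<^sup>2"
definition \<psi> :: "'a fps" where "\<psi> = fps_X * inverse \<phi>"

lemma inverse_L: "inverse L * L = 1" and inverse_M: "inverse M * M = 1"
  by (simp_all add: L_def M_def inverse_mult_eq_1)

lemma \<phi>_nth_0: "\<phi> $ 0 = 1"
  by (simp add: \<phi>_def L_def M_def power2_eq_square)

lemma \<psi>_nth_0: "\<psi> $ 0 = 0"
  by (simp add: \<psi>_def)

lemma \<psi>_eq: "\<psi> = fps_X * inverse M * inverse L ^ 2"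
proof -
  have "inverse \<phi> = inverse M * inverse L ^ 2"
    by (simp add: \<phi>_def fps_inverse_mult power2_eq_square)
  then show ?thesis by (simp add: \<psi>_def mult.assoc)
qed

lemma \<phi>_power: "\<phi> ^ n = M ^ n * L ^ (2 * n)"
  by (simp add: \<phi>_def power_mult_distrib power_mult[symmetric] mult.commute)

text \<open>\<open>\<psi>\<close> is the compositional inverse of \<open>R = F / (1 - l F)\<close> (lemma \<open>R_compose_\<psi>\<close>). After
  the substitution the system has an explicit rational solution, which by uniqueness is the one.\<close>
lemma compose_\<psi>: "F oo \<psi> = fps_X * inverse L" "G oo \<psi> = fps_X * inverse M * inverse L"
proof -
  have "F oo \<psi> = \<psi> + (fps_const l * (F oo \<psi>) + fps_const m * (G oo \<psi>)) * (F oo \<psi>)"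
    by (subst F_eq) (simp add: fps_compose_add_distrib fps_compose_mult_distrib[OF \<psi>_nth_0] \<psi>_nth_0)
  moreover have "G oo \<psi> = \<psi> + fps_const l * (F oo \<psi>) * (G oo \<psi>)"
    by (subst G_eq) (simp add: fps_compose_add_distrib fps_compose_mult_distrib[OF \<psi>_nth_0] \<psi>_nth_0)
  moreover have "\<psi> + (fps_const l * (fps_X * inverse L) + fps_const m * (fps_X * inverse M * inverse L))
      * (fps_X * inverse L) = fps_X * inverse L * (inverse L * (inverse M * M + fps_const l * fps_X))"
    by (simp add: \<psi>_eq M_def algebra_simps power2_eq_square)
  moreover have "\<psi> + fps_const l * (fps_X * inverse L) * (fps_X * inverse M * inverse L)
      = fps_X * inverse M * inverse L * (inverse L * L)"
    by (simp add: \<psi>_eq L_def algebra_simps power2_eq_square)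
  ultimately show "F oo \<psi> = fps_X * inverse L" "G oo \<psi> = fps_X * inverse M * inverse L"
    using fps_tree_system_unique[of "F oo \<psi>" "G oo \<psi>" "fps_X * inverse L" "fps_X * inverse M * inverse L"]
    by (simp_all add: F_nth_0 G_nth_0 \<psi>_nth_0 inverse_L inverse_M flip: L_def)
qed

lemma M_power_L_power_nth:
  "(M ^ a * L ^ b) $ k = (\<Sum>j=0..k. of_nat (a choose j) * of_nat (b choose (k - j)) * l ^ (k - j) * m ^ j)"
  unfolding fps_mult_nth M_def L_def fps_linear_power_nth by (simp add: mult_ac)

lemma deriv_X_mult_inverse_L: "fps_deriv (fps_X * inverse L) = inverse L ^ 2"
proof -
  have "fps_deriv (fps_X * inverse L) = inverse L - fps_X * fps_const l * inverse L ^ 2"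
    by (simp add: fps_inverse_deriv L_def del: fps_const_neg add: fps_const_neg[symmetric])
  moreover have "inverse L ^ 2 = inverse L * (inverse L * L) - fps_X * fps_const l * inverse L ^ 2"
    by (simp add: L_def algebra_simps power2_eq_square)
  ultimately show ?thesis
    by (simp add: inverse_L)
qed

lemma F_nth:
  assumes "n \<ge> 1"
  shows "F $ n = (\<Sum>k=0..n-1. 1 / of_nat n * of_nat (n choose k) * of_nat ((2*n-2) choose (n-k-1))
                         * l ^ (n-k-1) * m ^ k)"
proof -
  have "L ^ (2 * n) = L ^ (2 * n - 2) * L ^ 2"
    using \<open>n \<ge> 1\<close> by (metis le_add_diff_inverse2 mult_le_mono2 mult_1_right power_add)
  then have "fps_deriv (fps_X * inverse L) * \<phi> ^ n = M ^ n * L ^ (2 * n - 2) * (inverse L * L) ^ 2"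
    by (simp only: deriv_X_mult_inverse_L \<phi>_power power_mult_distrib mult_ac)
  then have "of_nat n * F $ n = (M ^ n * L ^ (2 * n - 2)) $ (n - 1)"
    using fps_lagrange_inversion[OF \<phi>_nth_0 _ \<open>n \<ge> 1\<close>] compose_\<psi>(1)
    by (simp add: \<psi>_def inverse_L)
  then have "F $ n = (M ^ n * L ^ (2 * n - 2)) $ (n - 1) / of_nat n"
    using \<open>n \<ge> 1\<close> by (simp add: field_simps)
  then show ?thesis
    by (simp add: M_power_L_power_nth sum_divide_distrib mult_ac)
qed

definition K :: "'a fps" where "K = 1 - fps_const l * F"
definition R :: "'a fps" where "R = F * inverse K"

lemma inverse_K: "inverse K * K = 1"
  by (simp add: K_def F_nth_0 inverse_mult_eq_1)

lemma R_mult_K: "R * K = F"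
  by (simp add: R_def inverse_K mult.assoc)

lemma G_eq_R: "G = fps_X + fps_const l * fps_X * R"
proof -
  have "K $ 0 = 1"
    by (simp add: K_def F_nth_0)
  then have "K \<noteq> 0"
    by auto
  have "(fps_X + fps_const l * fps_X * R) * K = fps_X * K + fps_const l * fps_X * (R * K)"
    by (simp add: algebra_simps)
  also have "\<dots> = fps_X"
    by (simp only: R_mult_K) (simp add: K_def algebra_simps)
  also have "\<dots> = G * K"
    using G_eq by (simp add: K_def algebra_simps)
  finally show ?thesis
    using \<open>K \<noteq> 0\<close> by simp
qed

lemma R_compose_\<psi>: "R oo \<psi> = fps_X"
proof -
  have "(R oo \<psi>) * (1 - fps_const l * (F oo \<psi>)) = F oo \<psi>"
    using arg_cong[OF R_mult_K, of "\<lambda>f. f oo \<psi>"]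
    by (simp add: K_def fps_compose_mult_distrib[OF \<psi>_nth_0] fps_compose_sub_distrib)
  moreover have "1 - fps_const l * (fps_X * inverse L) = inverse L"
    using inverse_L by (simp add: L_def algebra_simps)
  ultimately have "(R oo \<psi>) * inverse L * L = fps_X * inverse L * L"
    by (simp add: compose_\<psi>)
  then show ?thesis
    by (simp add: inverse_L mult.assoc)
qed

lemma G_nth:
  assumes "n \<ge> 2"
  shows "G $ n = (\<Sum>k=1..n-1. 1 / of_nat (n-1) * of_nat ((n-1) choose (k-1)) * of_nat ((2*n-2) choose (n-k-1))
                         * l ^ (n-k) * m ^ (k-1))"
proof -
  have "of_nat (n - 1) * R $ (n - 1) = (\<phi> ^ (n - 1)) $ (n - 2)"
    using fps_lagrange_inversion[OF \<phi>_nth_0 _, of R fps_X "n - 1"] R_compose_\<psi> assms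
    by (simp add: \<psi>_def numeral_2_eq_2)
  also have "\<dots> = (M ^ (n - 1) * L ^ (2 * n - 2)) $ (n - 2)"
    by (simp add: \<phi>_power right_diff_distrib')
  finally have "G $ n = l / of_nat (n - 1) * (M ^ (n - 1) * L ^ (2 * n - 2)) $ (n - 2)"
    using assms by (subst G_eq_R) (simp add: field_simps numeral_2_eq_2)
  also have "\<dots> = (\<Sum>j=0..n-2. 1 / of_nat (n-1) * of_nat ((n-1) choose j) * of_nat ((2*n-2) choose (n-Suc j-1))
                         * l ^ (n-Suc j) * m ^ j)"
    unfolding M_power_L_power_nth sum_distrib_left
  proof (rule sum.cong)
    fix j assume "j \<in> {0..n-2}"
    then have "n - Suc j = Suc (n - 2 - j)"
      using assms by auto
    then show "l / of_nat (n - 1) * (of_nat ((n - 1) choose j) * of_nat ((2*n-2) choose (n-2-j))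
        * l ^ (n-2-j) * m ^ j) = 1 / of_nat (n-1) * of_nat ((n-1) choose j)
        * of_nat ((2*n-2) choose (n-Suc j-1)) * l ^ (n-Suc j) * m ^ j"
      by simp
  qed simp
  also have "\<dots> = (\<Sum>k=Suc 0..Suc (n-2). 1 / of_nat (n-1) * of_nat ((n-1) choose (k-1))
                         * of_nat ((2*n-2) choose (n-k-1)) * l ^ (n-k) * m ^ (k-1))"
    by (simp only: sum.shift_bounds_cl_Suc_ivl diff_Suc_1)
  also have "Suc (n - 2) = n - 1"
    using assms by simp
  finally show ?thesis
    by simp
qed

lemma l_times_F_nth:
  assumes "n \<ge> 1"
  shows "l * F $ n = (\<Sum>k=0..n-1. of_nat (n choose k) * of_nat ((2*n-2) choose (n-k-1)) / of_nat n
                         * l ^ (n-k) * m ^ k)"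
  unfolding F_nth[OF assms] sum_distrib_left
proof (rule sum.cong)
  fix k assume "k \<in> {0..n-1}"
  then have "n - k = Suc (n - k - 1)"
    using assms by auto
  then show "l * (1 / of_nat n * of_nat (n choose k) * of_nat ((2*n-2) choose (n-k-1)) * l ^ (n-k-1) * m ^ k)
      = of_nat (n choose k) * of_nat ((2*n-2) choose (n-k-1)) / of_nat n * l ^ (n-k) * m ^ k"
    by simp
qed simp

lemma m_times_G_nth:
  assumes "n \<ge> 2"
  shows "m * G $ n = (\<Sum>k=0..n-1. of_nat k / of_nat (n - 1)
      * (of_nat (n choose k) * of_nat ((2*n-2) choose (n-k-1)) / of_nat n) * l ^ (n-k) * m ^ k)"
proof -
  have "m * G $ n = (\<Sum>k=1..n-1. of_nat k / of_nat (n - 1)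
      * (of_nat (n choose k) * of_nat ((2*n-2) choose (n-k-1)) / of_nat n) * l ^ (n-k) * m ^ k)"
    unfolding G_nth[OF assms] sum_distrib_left
  proof (rule sum.cong)
    fix k assume "k \<in> {1..n-1}"
    then have "k \<noteq> 0" "m ^ k = m * m ^ (k - 1)"
      by (auto simp flip: power_Suc)
    moreover have "of_nat (n choose k) = (of_nat n * of_nat ((n - 1) choose (k - 1)) / of_nat k :: 'a)"
      using times_binomial_minus1_eq[of k n] \<open>k \<noteq> 0\<close> by (simp add: field_simps flip: of_nat_mult)
    ultimately show "m * (1 / of_nat (n-1) * of_nat ((n-1) choose (k-1)) * of_nat ((2*n-2) choose (n-k-1))
        * l ^ (n-k) * m ^ (k-1)) = of_nat k / of_nat (n - 1)
        * (of_nat (n choose k) * of_nat ((2*n-2) choose (n-k-1)) / of_nat n) * l ^ (n-k) * m ^ k"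
      using assms by simp
  qed simp
  also have "\<dots> = (\<Sum>k=0..n-1. of_nat k / of_nat (n - 1)
      * (of_nat (n choose k) * of_nat ((2*n-2) choose (n-k-1)) / of_nat n) * l ^ (n-k) * m ^ k)"
    by (simp add: sum.atLeast_Suc_atMost)
  finally show ?thesis .
qed

lemma l_F_plus_m_G_nth:
  assumes "n \<ge> 2"
  shows "l * F $ n + m * G $ n = (\<Sum>k=0..n-1. 2 / of_nat n * of_nat (n choose k)
                         * of_nat ((2*n-3) choose (n-k-1)) * l ^ (n-k) * m ^ k)"
  unfolding l_times_F_nth[OF order.trans[OF one_le_numeral assms]] m_times_G_nth[OF assms]
    sum.distrib[symmetric]
proof (rule sum.cong)
  fix k assume "k \<in> {0..n-1}"
  then have "k < n"
    using assms by auto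
  then show "of_nat (n choose k) * of_nat ((2*n-2) choose (n-k-1)) / of_nat n * l ^ (n-k) * m ^ k
      + of_nat k / of_nat (n - 1) * (of_nat (n choose k) * of_nat ((2*n-2) choose (n-k-1)) / of_nat n)
        * l ^ (n-k) * m ^ k
    = 2 / of_nat n * of_nat (n choose k) * of_nat ((2*n-3) choose (n-k-1)) * l ^ (n-k) * m ^ k"
    using arg_cong[OF binomial_coeff_combination[OF assms \<open>k < n\<close>], of "\<lambda>x. x * (l ^ (n-k) * m ^ k)"]
    by (simp only: distrib_right mult_1_left mult.assoc)
qed simp

end

abbreviation Alm_series_low :: "nat \<Rightarrow> nat \<Rightarrow> real fps" where
  "Alm_series_low l m \<equiv> colored_tree_series (Alm l m) (l + m) 1"

abbreviation Alm_series_high :: "nat \<Rightarrow> nat \<Rightarrow> real fps" where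
  "Alm_series_high l m \<equiv> colored_tree_series (Alm l m) (l + m) (l + 1)"

lemma colored_tree_series_Alm_low:
  assumes "i \<in> {1..l}"
  shows "colored_tree_series (Alm l m) (l + m) i = Alm_series_low l m"
  using assms by (intro colored_tree_series_eq_if_same_row) (auto simp: Alm_def)

lemma colored_tree_series_Alm_high:
  assumes "i \<in> {l+1..l+m}"
  shows "colored_tree_series (Alm l m) (l + m) i = Alm_series_high l m"
  using assms by (intro colored_tree_series_eq_if_same_row) (auto simp: Alm_def)

lemma sum_colored_tree_series_Alm:
  "(\<Sum>j\<in>{1..l}. colored_tree_series (Alm l m) (l + m) j) = fps_const (real l) * Alm_series_low l m"
  "(\<Sum>j\<in>{l+1..l+m}. colored_tree_series (Alm l m) (l + m) j) = fps_const (real m) * Alm_series_high l m"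
proof -
  have "(\<Sum>j\<in>{1..l}. colored_tree_series (Alm l m) (l + m) j) = (\<Sum>j\<in>{1..l}. Alm_series_low l m)"
    by (intro sum.cong refl colored_tree_series_Alm_low)
  then show "(\<Sum>j\<in>{1..l}. colored_tree_series (Alm l m) (l + m) j) = fps_const (real l) * Alm_series_low l m"
    by (simp add: fps_of_nat)
  have "(\<Sum>j\<in>{l+1..l+m}. colored_tree_series (Alm l m) (l + m) j) = (\<Sum>j\<in>{l+1..l+m}. Alm_series_high l m)"
    by (intro sum.cong refl colored_tree_series_Alm_high)
  then show "(\<Sum>j\<in>{l+1..l+m}. colored_tree_series (Alm l m) (l + m) j) = fps_const (real m) * Alm_series_high l m"
    by (simp add: fps_of_nat)
qed

lemma Alm_series_colored_tree_series:
  assumes "l \<ge> 1" "m \<ge> 1"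
  shows "Alm_series (real l) (real m) (Alm_series_low l m) (Alm_series_high l m)"
proof
  have "(\<Sum>j\<in>{j \<in> {1..l+m}. Alm l m 1 j = 1}. colored_tree_series (Alm l m) (l + m) j)
      = (\<Sum>j\<in>{1..l} \<union> {l+1..l+m}. colored_tree_series (Alm l m) (l + m) j)"
    using assms by (intro sum.cong) (auto simp: Alm_def)
  also have "\<dots> = (\<Sum>j\<in>{1..l}. colored_tree_series (Alm l m) (l + m) j)
      + (\<Sum>j\<in>{l+1..l+m}. colored_tree_series (Alm l m) (l + m) j)"
    by (rule sum.union_disjoint) auto
  also have "\<dots> = fps_const (real l) * Alm_series_low l m + fps_const (real m) * Alm_series_high l m"
    by (simp only: sum_colored_tree_series_Alm)
  finally have low_row: "(\<Sum>j\<in>{j \<in> {1..l+m}. Alm l m 1 j = 1}. colored_tree_series (Alm l m) (l + m) j)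
      = fps_const (real l) * Alm_series_low l m + fps_const (real m) * Alm_series_high l m" .
  have "1 \<in> {1..l+m}"
    using assms by simp
  from colored_tree_series_eq[OF this, of "Alm l m", where 'a = real]
  show "Alm_series_low l m = fps_X +
      (fps_const (real l) * Alm_series_low l m + fps_const (real m) * Alm_series_high l m) * Alm_series_low l m"
    unfolding low_row .
  have "{j \<in> {1..l+m}. Alm l m (l + 1) j = 1} = {1..l}"
    by (auto simp: Alm_def)
  then have high_row: "(\<Sum>j\<in>{j \<in> {1..l+m}. Alm l m (l + 1) j = 1}. colored_tree_series (Alm l m) (l + m) j)
      = fps_const (real l) * Alm_series_low l m"
    by (simp only: sum_colored_tree_series_Alm)
  have "l + 1 \<in> {1..l+m}"
    using assms by simp
  from colored_tree_series_eq[OF this, of "Alm l m", where 'a = real]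
  show "Alm_series_high l m = fps_X + fps_const (real l) * Alm_series_low l m * Alm_series_high l m"
    unfolding high_row .
qed simp_all

lemma tAi_Alm_low:
  assumes "i \<in> {1..l}"
  shows "real (tAi (Alm l m) (l + m) i n) = Alm_series_low l m $ n"
  using colored_tree_series_Alm_low[OF assms]
  by (simp add: tAi_eq_card_colored_trees colored_tree_series_def fps_eq_iff)

lemma tAi_Alm_high:
  assumes "i \<in> {l+1..l+m}"
  shows "real (tAi (Alm l m) (l + m) i n) = Alm_series_high l m $ n"
  using colored_tree_series_Alm_high[OF assms]
  by (simp add: tAi_eq_card_colored_trees colored_tree_series_def fps_eq_iff)

lemma tA_Alm:
  "real (tA (Alm l m) (l + m) n) = real l * Alm_series_low l m $ n + real m * Alm_series_high l m $ n"
proof -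
  have "{1..l+m} = {1..l} \<union> {l+1..l+m}"
    by auto
  then show ?thesis
    by (simp add: tA_eq_sum_tAi sum.union_disjoint tAi_Alm_low tAi_Alm_high)
qed

theorem theorem33:
  fixes l m n :: nat
  assumes "l \<ge> 1" "m \<ge> 1" "n \<ge> 1"
  shows "(n \<ge> 2 \<longrightarrow> real (tA (Alm l m) (l + m) n) =
           (\<Sum>k=0..n-1. 2 / real n * real (n choose k) * real ((2*n-3) choose (n-k-1))
                         * real l ^ (n-k) * real m ^ k))
    \<and> (\<forall>i. 1 \<le> i \<and> i \<le> l \<longrightarrow> real (tAi (Alm l m) (l + m) i n) =
           (\<Sum>k=0..n-1. 1 / real n * real (n choose k) * real ((2*n-2) choose (n-k-1))
                         * real l ^ (n-k-1) * real m ^ k))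
    \<and> (\<forall>i. l + 1 \<le> i \<and> i \<le> l + m \<and> n \<ge> 2 \<longrightarrow> real (tAi (Alm l m) (l + m) i n) =
           (\<Sum>k=1..n-1. 1 / real (n-1) * real ((n-1) choose (k-1)) * real ((2*n-2) choose (n-k-1))
                         * real l ^ (n-k) * real m ^ (k-1)))"
proof -
  interpret Alm_series "real l" "real m" "Alm_series_low l m" "Alm_series_high l m"
    using assms(1,2) by (rule Alm_series_colored_tree_series)
  show ?thesis
  proof (intro conjI allI impI)
    assume "n \<ge> 2"
    then show "real (tA (Alm l m) (l + m) n) = (\<Sum>k=0..n-1. 2 / real n * real (n choose k)
        * real ((2*n-3) choose (n-k-1)) * real l ^ (n-k) * real m ^ k)"
      by (simp only: tA_Alm l_F_plus_m_G_nth)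
  next
    fix i assume "1 \<le> i \<and> i \<le> l"
    then show "real (tAi (Alm l m) (l + m) i n) = (\<Sum>k=0..n-1. 1 / real n * real (n choose k)
        * real ((2*n-2) choose (n-k-1)) * real l ^ (n-k-1) * real m ^ k)"
      by (simp only: tAi_Alm_low F_nth[OF assms(3)] atLeastAtMost_iff)
  next
    fix i assume "l + 1 \<le> i \<and> i \<le> l + m \<and> n \<ge> 2"
    then show "real (tAi (Alm l m) (l + m) i n) = (\<Sum>k=1..n-1. 1 / real (n-1) * real ((n-1) choose (k-1))
        * real ((2*n-2) choose (n-k-1)) * real l ^ (n-k) * real m ^ (k-1))"
      by (simp only: tAi_Alm_high G_nth atLeastAtMost_iff)
  qed
qed

end
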